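(* Let $k=\mathbb C$, $n\ge2$, $A=\mathbb C_{-1}[x_1,\dots,x_n]$, and let $M(n,1,2)$ be the subgroup of $\mathrm{Aut}(A)$ generated by the mystic reflections $\tau_{i,j,1}$ ($i\ne j$), identified via its action on $A_1$ in the basis $x_1,\dots,x_n$ with a group of $n\times n$ matrices. Then $M(n,1,2)$ is the group of $n\times n$ signed permutation matrices (permutation matrices with entries replaced by $\pm1$) of determinant $1$, of order $2^{n-1}n!$, and $M(n,1,2)$ is isomorphic to the classical reflection group $G(2,2,n)$ if and only if $n$ is odd.
   Context: $A=\mathbb C_{-1}[x_1,\dots,x_n]$ is generated by $x_1,\dots,x_n$ with $x_jx_i=-x_ix_j$ for $i\ne j$. For $s\ne t$, $\tau_{s,t,1}$ is the graded automorphism with $x_s\mapsto x_t$, $x_t\mapsto-x_s$, $x_i\mapsto x_i$ otherwise. $G(2,2,n)$ is the group of $n\times n$ matrices $DP$ with $P$ a permutation matrix and $D$ a diagonal matrix with entries $\pm1$ containing an even number of $-1$'s. *)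

theory Defs
  imports "Jordan_Normal_Form.Matrix" "Jordan_Normal_Form.Determinant" "HOL-Algebra.Generated_Groups"
    "HOL-Combinatorics.Permutations"
begin

text \<open>Matrix (in the basis x_1..x_n, indices 0..n-1) of the action on A_1 of tau_{s,t,1}:
  x_s maps to x_t, x_t maps to -x_s, all other x_i fixed.  Column j is the image of x_j.\<close>
definition tau_mat :: "nat \<Rightarrow> nat \<Rightarrow> nat \<Rightarrow> complex mat" where
  "tau_mat n s t = mat n n (\<lambda>(i,j).
     if j = s then (if i = t then 1 else 0)
     else if j = t then (if i = s then -1 else 0)
     else if i = j then 1 else 0)"

definition GLc :: "nat \<Rightarrow> complex mat monoid" where
  "GLc n = units_of (ring_mat TYPE(complex) n ())"

definition M_n12 :: "nat \<Rightarrow> complex mat set" where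
  "M_n12 n = generate (GLc n) {tau_mat n s t | s t. s < n \<and> t < n \<and> s \<noteq> t}"

definition signed_perm_mat :: "nat \<Rightarrow> complex mat \<Rightarrow> bool" where
  "signed_perm_mat n A \<longleftrightarrow> A \<in> carrier_mat n n \<and>
     (\<exists>p. p permutes {..<n} \<and>
        (\<forall>i<n. \<forall>j<n. if i = p j then A $$ (i,j) \<in> {1, -1} else A $$ (i,j) = 0))"

definition perm_matrix :: "nat \<Rightarrow> (nat \<Rightarrow> nat) \<Rightarrow> complex mat" where
  "perm_matrix n p = mat n n (\<lambda>(i,j). if i = p j then 1 else 0)"

definition G22n :: "nat \<Rightarrow> complex mat set" where
  "G22n n = {D * P | D P. (\<exists>d. (\<forall>i<n. d i \<in> {1, -1}) \<and> even (card {i. i < n \<and> d i = -1}) \<and>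
                                 D = mat n n (\<lambda>(i,j). if i = j then d i else 0)) \<and>
                           (\<exists>p. p permutes {..<n} \<and> P = perm_matrix n p)}"

end

theory Submission
  imports Defs "HOL-Combinatorics.Cycles" "HOL-Computational_Algebra.Primes"
begin

(* A signed permutation matrix is written spmat n p d, with p a permutation of {..<n} and d a
   vector of signs; products, powers, inverses and determinants are explicit in (p, d), and
   det (spmat n p d) = sign p * prod d.  For a multiplicative character c of the symmetric group,
   the matrices with prod d = c p form a subgroup sp_group n c of GL_n(C) of order 2^(n-1) n!.
   Both groups of the theorem are of this form:
   - M(n,1,2) = sp_group n sign.  Each tau_{s,t,1} lies in it; conversely, products of the tau
     realise every permutation up to signs, and products of their squares give every diagonal
     sign matrix with an even number of -1's.  Determinant 1 means prod d = sign p.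
   - G(2,2,n) = sp_group n 1.
   For odd n, X |-> det X * X is an isomorphism G(2,2,n) -> M(n,1,2).  For even n, M(n,1,2)
   contains an element (a signed n-cycle) whose n-th power is the central element -1, whereas in
   G(2,2,n) no n-th power is central and nontrivial: for n >= 3 the centre is {1,-1} and -1 has no
   n-th root (a root of -1 of order 2^a forces the sign product (-1)^(n/2^a)), and G(2,2,2) has
   exponent 2.  An isomorphism would carry the first property to the other group. *)

subsection \<open>Signed permutation matrices\<close>

text \<open>Sign vectors of length n, normalised to 1 outside {..<n} so that they are determined by
  their first n values.\<close>
definition signs :: "nat \<Rightarrow> (nat \<Rightarrow> complex) set" where
  "signs n = {d. (\<forall>j<n. d j = 1 \<or> d j = -1) \<and> (\<forall>j. n \<le> j \<longrightarrow> d j = 1)}"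

definition spmat :: "nat \<Rightarrow> (nat \<Rightarrow> nat) \<Rightarrow> (nat \<Rightarrow> complex) \<Rightarrow> complex mat" where
  "spmat n p d = mat n n (\<lambda>(i,j). if i = p j then d j else 0)"

lemma spmat_carrier [simp]: "spmat n p d \<in> carrier_mat n n"
  and spmat_dim [simp]: "dim_row (spmat n p d) = n" "dim_col (spmat n p d) = n"
  by (simp_all add: spmat_def)

lemma spmat_index [simp]:
  "i < n \<Longrightarrow> j < n \<Longrightarrow> spmat n p d $$ (i,j) = (if i = p j then d j else 0)"
  by (simp add: spmat_def)

lemma permutes_lessThan: "p permutes {..<n} \<Longrightarrow> j < n \<Longrightarrow> p j < n"
  by (metis lessThan_iff permutes_in_image)

lemma signs_values: "d \<in> signs n \<Longrightarrow> j < n \<Longrightarrow> d j = 1 \<or> d j = -1"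
  and signs_outside: "d \<in> signs n \<Longrightarrow> n \<le> j \<Longrightarrow> d j = 1"
  by (auto simp: signs_def)

lemma signs_square: "d \<in> signs n \<Longrightarrow> d j * d j = 1"
  unfolding signs_def by (cases "j < n") auto

lemma signs_nonzero: "d \<in> signs n \<Longrightarrow> d j \<noteq> 0"
  using signs_square[of d n j] by auto

lemma signs_one [simp]: "(\<lambda>_. 1) \<in> signs n"
  by (simp add: signs_def)

lemma signs_mult:
  assumes "p permutes {..<n}" "d \<in> signs n" "e \<in> signs n"
  shows "(\<lambda>j. d (p j) * e j) \<in> signs n"
proof -
  have "d (p j) * e j = 1 \<or> d (p j) * e j = -1" if "j < n" for j
    using signs_values[OF assms(2) permutes_lessThan[OF assms(1) that]] signs_values[OF assms(3) that]
    by auto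
  moreover have "d (p j) * e j = 1" if "n \<le> j" for j
    using that permutes_not_in[OF assms(1), of j] signs_outside[OF assms(2)] signs_outside[OF assms(3)]
    by simp
  ultimately show ?thesis by (simp add: signs_def)
qed

lemma spmat_mult:
  assumes p: "p permutes {..<n}" and q: "q permutes {..<n}"
  shows "spmat n p d * spmat n q e = spmat n (p \<circ> q) (\<lambda>j. d (q j) * e j)"
proof (rule eq_matI)
  fix i j assume "i < dim_row (spmat n (p \<circ> q) (\<lambda>j. d (q j) * e j))"
    and "j < dim_col (spmat n (p \<circ> q) (\<lambda>j. d (q j) * e j))"
  hence i: "i < n" and j: "j < n" by auto
  have "(spmat n p d * spmat n q e) $$ (i,j) = (\<Sum>k<n. spmat n p d $$ (i,k) * spmat n q e $$ (k,j))"
    using i j by (simp add: scalar_prod_def atLeast0LessThan)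
  also have "\<dots> = (\<Sum>k<n. if k = q j then (if i = p k then d k * e j else 0) else 0)"
    by (rule sum.cong) (auto simp: i j)
  also have "\<dots> = (if i = p (q j) then d (q j) * e j else 0)"
    using permutes_lessThan[OF q j] by simp
  finally show "(spmat n p d * spmat n q e) $$ (i,j) = spmat n (p \<circ> q) (\<lambda>j. d (q j) * e j) $$ (i,j)"
    using i j by simp
qed auto

lemma spmat_id: "spmat n id (\<lambda>_. 1) = 1\<^sub>m n"
  by (rule eq_matI) auto

lemma spmat_neg_id: "spmat n id (\<lambda>j. if j < n then -1 else 1) = - 1\<^sub>m n"
  by (rule eq_matI) auto

lemma spmat_eq_iff:
  assumes p: "p permutes {..<n}" and q: "q permutes {..<n}" and d: "d \<in> signs n" and e: "e \<in> signs n"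
  shows "spmat n p d = spmat n q e \<longleftrightarrow> p = q \<and> d = e"
proof
  assume eq: "spmat n p d = spmat n q e"
  have pq: "p j = q j \<and> d j = e j" if j: "j < n" for j
  proof -
    have "spmat n q e $$ (p j, j) = d j"
      using j permutes_lessThan[OF p j] by (simp flip: eq)
    thus ?thesis using j permutes_lessThan[OF p j] signs_nonzero[OF d, of j] by (auto split: if_splits)
  qed
  have "p j = q j \<and> d j = e j" for j
    using pq[of j] permutes_not_in[OF p, of j] permutes_not_in[OF q, of j]
      signs_outside[OF d, of j] signs_outside[OF e, of j] by (cases "j < n") auto
  thus "p = q \<and> d = e" by auto
qed auto

lemma spmat_smult:
  "c \<cdot>\<^sub>m spmat n p d = spmat n p (\<lambda>j. if j < n then c * d j else 1)"
  by (rule eq_matI) auto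

text \<open>Only the permutation p contributes to the Leibniz expansion.\<close>
lemma spmat_det:
  assumes p: "p permutes {..<n}"
  shows "det (spmat n p d) = of_int (sign p) * (\<Prod>j<n. d j)"
proof -
  have "det (spmat n p d) = (\<Sum>q | q permutes {..<n}. of_int (sign q) * (\<Prod>j<n. spmat n p d $$ (q j, j)))"
    using det_col[OF spmat_carrier] by (simp add: atLeast0LessThan)
  also have "\<dots> = (\<Sum>q | q permutes {..<n}. if q = p then of_int (sign p) * (\<Prod>j<n. d j) else 0)"
  proof (rule sum.cong[OF refl])
    fix q assume "q \<in> {q. q permutes {..<n}}"
    hence q: "q permutes {..<n}" by simp
    show "of_int (sign q) * (\<Prod>j<n. spmat n p d $$ (q j, j))
      = (if q = p then of_int (sign p) * (\<Prod>j<n. d j) else 0)"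
    proof (cases "q = p")
      case True
      thus ?thesis by (auto simp: permutes_lessThan[OF p] intro!: prod.cong)
    next
      case False
      then obtain j where "q j \<noteq> p j" by auto
      moreover from this have j: "j < n"
        using permutes_not_in[OF p, of j] permutes_not_in[OF q, of j] by (cases "j < n") auto
      ultimately have "spmat n p d $$ (q j, j) = 0" using permutes_lessThan[OF q j] by simp
      thus ?thesis using False j by (auto intro: prod_zero)
    qed
  qed
  also have "\<dots> = of_int (sign p) * (\<Prod>j<n. d j)"
    using p by (simp add: finite_permutations)
  finally show ?thesis .
qed

lemma spmat_inverse:
  assumes p: "p permutes {..<n}" and d: "d \<in> signs n"
  defines "d' \<equiv> (\<lambda>j. d (Hilbert_Choice.inv p j))"
  shows "spmat n p d * spmat n (Hilbert_Choice.inv p) d' = 1\<^sub>m n" "spmat n (Hilbert_Choice.inv p) d' * spmat n p d = 1\<^sub>m n"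
    and "d' \<in> signs n"
proof -
  have ip: "Hilbert_Choice.inv p permutes {..<n}" using permutes_inv[OF p] .
  show "spmat n p d * spmat n (Hilbert_Choice.inv p) d' = 1\<^sub>m n"
    unfolding spmat_mult[OF p ip] permutes_inv_o(1)[OF p] d'_def signs_square[OF d] spmat_id ..
  show "spmat n (Hilbert_Choice.inv p) d' * spmat n p d = 1\<^sub>m n"
    unfolding spmat_mult[OF ip p] permutes_inv_o(2)[OF p] d'_def permutes_inverses(2)[OF p]
      signs_square[OF d] spmat_id ..
  show "d' \<in> signs n" using signs_mult[OF ip d signs_one] by (simp add: d'_def)
qed

lemma spmat_pow:
  assumes p: "p permutes {..<n}"
  shows "spmat n p d ^\<^sub>m k = spmat n (p ^^ k) (\<lambda>j. \<Prod>i<k. d ((p ^^ i) j))"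
proof (induction k)
  case 0
  show ?case by (simp flip: spmat_id add: id_def)
next
  case (Suc k)
  have "spmat n p d ^\<^sub>m Suc k = spmat n (p ^^ k \<circ> p) (\<lambda>j. (\<Prod>i<k. d ((p ^^ i) (p j))) * d j)"
    using Suc spmat_mult[OF permutes_funpow[OF p] p] by simp
  also have "(\<lambda>j. (\<Prod>i<k. d ((p ^^ i) (p j))) * d j) = (\<lambda>j. \<Prod>i<Suc k. d ((p ^^ i) j))"
  proof
    fix j
    have "(\<Prod>i<Suc k. d ((p ^^ i) j)) = d j * (\<Prod>i<k. d ((p ^^ Suc i) j))"
      by (simp only: prod.lessThan_Suc_shift funpow_0)
    also have "(\<lambda>i. d ((p ^^ Suc i) j)) = (\<lambda>i. d ((p ^^ i) (p j)))"
      by (simp add: funpow_swap1)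
    finally show "(\<Prod>i<k. d ((p ^^ i) (p j))) * d j = (\<Prod>i<Suc k. d ((p ^^ i) j))"
      by (simp add: mult.commute)
  qed
  also have "p ^^ k \<circ> p = p ^^ Suc k" by (rule funpow_Suc_right[symmetric])
  finally show ?case .
qed

lemma prod_signs:
  assumes "d \<in> signs n"
  shows "(\<Prod>j<n. d j) = (-1) ^ card {j. j < n \<and> d j = -1}"
proof -
  have "(\<Prod>j<n. d j) = (\<Prod>j\<in>{..<n} \<inter> {j. d j = -1}. -1) * (\<Prod>j\<in>{..<n} \<inter> - {j. d j = -1}. 1)"
    by (subst prod.If_cases[symmetric]) (auto intro!: prod.cong dest: signs_values[OF assms])
  also have "{..<n} \<inter> {j. d j = -1} = {j. j < n \<and> d j = -1}" by auto
  finally show ?thesis by simp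
qed

lemma prod_signs_eq_one_iff:
  "d \<in> signs n \<Longrightarrow> (\<Prod>j<n. d j) = 1 \<longleftrightarrow> even (card {j. j < n \<and> d j = -1})"
  by (simp add: prod_signs minus_one_power_iff)

lemma prod_permute: "p permutes {..<n} \<Longrightarrow> (\<Prod>j<n. d (p j)) = (\<Prod>j<n. d j)"
  using prod.permute[of p "{..<n}" d] by (simp add: o_def)

lemma finite_signs: "finite (signs n)"
proof -
  have "signs n \<subseteq> {d. \<forall>j. (j \<in> {..<n} \<longrightarrow> d j \<in> {1, -1}) \<and> (j \<notin> {..<n} \<longrightarrow> d j = 1)}"
    by (auto simp: signs_def)
  thus ?thesis by (rule finite_subset) (intro finite_set_of_finite_funs; simp)
qed

lemma prod_square_eq_one:
  assumes "\<And>j. j \<in> A \<Longrightarrow> (f j :: complex) * f j = 1"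
  shows "(\<Prod>j\<in>A. f j) * (\<Prod>j\<in>A. f j) = 1"
  using assms by (simp add: prod.distrib[symmetric])

text \<open>For n \<ge> 1, exactly half of the 2^n sign vectors have a prescribed product s = \<plusminus>1:
  all signs but the first are free, and the first one is then determined.\<close>
lemma card_signs_with_product:
  assumes n: "n \<ge> 1" and s: "s = 1 \<or> s = -1"
  shows "card {d \<in> signs n. (\<Prod>j<n. d j) = s} = 2 ^ (n - 1)"
proof -
  let ?I = "{1..<n}" and ?A = "{d \<in> signs n. (\<Prod>j<n. d j) = s}"
  have prod_split: "(\<Prod>j<n. d j) = d 0 * (\<Prod>j\<in>?I. d j)" for d :: "nat \<Rightarrow> complex"
    using n by (simp add: atLeast0LessThan[symmetric] prod.atLeast_Suc_lessThan)
  define lift where "lift f = (\<lambda>j. if j = 0 then s * (\<Prod>i\<in>?I. f i) else if j < n then f j else 1)"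
    for f :: "nat \<Rightarrow> complex"
  have sq: "(\<Prod>i\<in>?I. f i) * (\<Prod>i\<in>?I. f i) = 1" if "\<forall>i\<in>?I. f i = 1 \<or> f i = -1" for f :: "nat \<Rightarrow> complex"
    by (rule prod_square_eq_one) (use that in force)
  have "bij_betw (\<lambda>d. restrict d ?I) ?A (\<Pi>\<^sub>E i\<in>?I. {1, -1})"
  proof (rule bij_betwI[where g = lift])
    show "(\<lambda>d. restrict d ?I) \<in> ?A \<rightarrow> (\<Pi>\<^sub>E i\<in>?I. {1, -1})"
      by (auto dest: signs_values)
    show "lift \<in> (\<Pi>\<^sub>E i\<in>?I. {1, -1}) \<rightarrow> ?A"
    proof
      fix f :: "nat \<Rightarrow> complex" assume f: "f \<in> (\<Pi>\<^sub>E i\<in>?I. {1, -1})"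
      hence sqf: "(\<Prod>i\<in>?I. f i) * (\<Prod>i\<in>?I. f i) = 1" using sq by auto
      hence "(\<Prod>i\<in>?I. f i) = 1 \<or> (\<Prod>i\<in>?I. f i) = -1" by (metis square_eq_1_iff)
      hence "lift f \<in> signs n" using f s n by (auto simp: lift_def signs_def)
      moreover have "(\<Prod>j\<in>?I. lift f j) = (\<Prod>j\<in>?I. f j)"
        by (rule prod.cong) (auto simp: lift_def)
      hence "(\<Prod>j<n. lift f j) = s * ((\<Prod>j\<in>?I. f j) * (\<Prod>j\<in>?I. f j))"
        unfolding prod_split by (simp add: lift_def mult.assoc)
      hence "(\<Prod>j<n. lift f j) = s" by (simp only: sqf mult_1_right)
      ultimately show "lift f \<in> ?A" by simp
    qed
    show "lift (restrict d ?I) = d" if "d \<in> ?A" for d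
    proof
      fix j
      have d: "d \<in> signs n" and pd: "d 0 * (\<Prod>j\<in>?I. d j) = s" using that prod_split[of d] by auto
      have "s * (\<Prod>i\<in>?I. d i) = d 0"
        using sq[of d] signs_values[OF d] by (simp flip: pd add: mult.assoc)
      thus "lift (restrict d ?I) j = d j"
        using signs_outside[OF d, of j] by (auto simp: lift_def)
    qed
    show "restrict (lift f) ?I = f" if "f \<in> (\<Pi>\<^sub>E i\<in>?I. {1, -1})" for f
      using that by (auto simp: lift_def PiE_def extensional_def restrict_def)
  qed
  hence "card ?A = card (\<Pi>\<^sub>E i\<in>?I. {1, -1::complex})" by (rule bij_betw_same_card)
  also have "\<dots> = 2 ^ (n - 1)" by (simp add: card_PiE numeral_2_eq_2)
  finally show ?thesis .
qed

lemma signed_perm_mat_iff: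
  "signed_perm_mat n A \<longleftrightarrow> (\<exists>p d. p permutes {..<n} \<and> d \<in> signs n \<and> A = spmat n p d)"
proof
  assume "signed_perm_mat n A"
  then obtain p where A: "A \<in> carrier_mat n n" and p: "p permutes {..<n}"
    and ent: "\<forall>i<n. \<forall>j<n. if i = p j then A $$ (i,j) \<in> {1, -1} else A $$ (i,j) = 0"
    unfolding signed_perm_mat_def by blast
  define d where "d = (\<lambda>j. if j < n then A $$ (p j, j) else 1)"
  have "d \<in> signs n"
    using ent permutes_lessThan[OF p] by (fastforce simp: d_def signs_def)
  moreover have "A = spmat n p d"
    by (rule eq_matI) (use A ent in \<open>auto simp: d_def\<close>)
  ultimately show "\<exists>p d. p permutes {..<n} \<and> d \<in> signs n \<and> A = spmat n p d" using p by blast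
next
  assume "\<exists>p d. p permutes {..<n} \<and> d \<in> signs n \<and> A = spmat n p d"
  then obtain p d where "p permutes {..<n}" "d \<in> signs n" "A = spmat n p d" by blast
  thus "signed_perm_mat n A" by (auto simp: signed_perm_mat_def dest: signs_values)
qed

subsection \<open>Groups of signed permutation matrices cut out by a sign character\<close>

lemma GLc_group: "group (GLc n)"
  unfolding GLc_def using ring_mat[of n "()"]
  by (intro monoid.units_group) (auto simp: ring_def ring_mat_simps)

lemma GLc_mult [simp]: "mult (GLc n) = (*)"
  and GLc_one [simp]: "one (GLc n) = 1\<^sub>m n"
  by (simp_all add: GLc_def units_of_def ring_mat_simps)

lemma subgroup_pow:
  "x \<in> carrier_mat n n \<Longrightarrow> x [^]\<^bsub>(GLc n)\<lparr>carrier := S\<rparr>\<^esub> k = x ^\<^sub>m k"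
  by (induction k) auto

lemma GLc_unit:
  assumes "A \<in> carrier_mat n n" "B \<in> carrier_mat n n" "A * B = 1\<^sub>m n" "B * A = 1\<^sub>m n"
  shows "A \<in> carrier (GLc n)" "inv\<^bsub>GLc n\<^esub> A = B"
proof -
  interpret group "GLc n" by (rule GLc_group)
  have A: "A \<in> carrier (GLc n)" and B: "B \<in> carrier (GLc n)"
    using assms by (auto simp: GLc_def units_of_carrier Units_def ring_mat_simps)
  show "A \<in> carrier (GLc n)" by (rule A)
  show "inv\<^bsub>GLc n\<^esub> A = B" using inv_equality[of B A] A B assms by simp
qed

lemma spmat_GLc:
  assumes "p permutes {..<n}" "d \<in> signs n"
  shows "spmat n p d \<in> carrier (GLc n)"
    "inv\<^bsub>GLc n\<^esub> (spmat n p d) = spmat n (Hilbert_Choice.inv p) (\<lambda>j. d (Hilbert_Choice.inv p j))"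
  using GLc_unit[OF spmat_carrier spmat_carrier spmat_inverse(1,2)[OF assms]] by auto

definition sign_character :: "nat \<Rightarrow> ((nat \<Rightarrow> nat) \<Rightarrow> complex) \<Rightarrow> bool" where
  "sign_character n c \<longleftrightarrow> (\<forall>p. p permutes {..<n} \<longrightarrow> c p = 1 \<or> c p = -1) \<and>
     (\<forall>p q. p permutes {..<n} \<longrightarrow> q permutes {..<n} \<longrightarrow> c (p \<circ> q) = c p * c q)"

lemma sign_character_sign: "sign_character n (\<lambda>p. of_int (sign p))"
proof -
  have "of_int (sign p) = (1::complex) \<or> of_int (sign p) = (-1::complex)" for p :: "nat \<Rightarrow> nat"
    by (cases rule: sign_cases[of p]) auto
  thus ?thesis
    using sign_compose[OF permutes_imp_permutation[OF finite_lessThan]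
        permutes_imp_permutation[OF finite_lessThan]]
    by (auto simp: sign_character_def)
qed

lemma sign_character_trivial: "sign_character n (\<lambda>_. 1)"
  by (simp add: sign_character_def)

definition sp_group :: "nat \<Rightarrow> ((nat \<Rightarrow> nat) \<Rightarrow> complex) \<Rightarrow> complex mat set" where
  "sp_group n c = {spmat n p d | p d. p permutes {..<n} \<and> d \<in> signs n \<and> (\<Prod>j<n. d j) = c p}"

lemma sp_group_carrier_mat: "A \<in> sp_group n c \<Longrightarrow> A \<in> carrier_mat n n"
  by (auto simp: sp_group_def)

lemma spmat_in_sp_group_iff:
  assumes p: "p permutes {..<n}" and d: "d \<in> signs n"
  shows "spmat n p d \<in> sp_group n c \<longleftrightarrow> (\<Prod>j<n. d j) = c p"
  using spmat_eq_iff[OF p _ d] unfolding sp_group_def by (auto intro: p d)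

text \<open>Closure under products and inverses: the sign product is multiplicative in the sense
  prod (d \<circ> q * e) = prod d * prod e, matching c (p \<circ> q) = c p * c q.\<close>
lemma sp_group_subgroup:
  assumes c: "sign_character n c"
  shows "subgroup (sp_group n c) (GLc n)"
proof -
  interpret group "GLc n" by (rule GLc_group)
  have c_pm: "c p = 1 \<or> c p = -1" and c_mult: "c (p \<circ> q) = c p * c q"
    if "p permutes {..<n}" "q permutes {..<n}" for p q
    using c that by (auto simp: sign_character_def)
  have c_id: "c id = 1" using c_mult[OF permutes_id permutes_id] c_pm[OF permutes_id permutes_id] by auto
  show ?thesis
  proof (rule subgroupI)
    show "sp_group n c \<subseteq> carrier (GLc n)" by (auto simp: sp_group_def spmat_GLc)
    have "spmat n id (\<lambda>_. 1) \<in> sp_group n c" unfolding sp_group_def using c_id by force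
    thus "sp_group n c \<noteq> {}" by blast
  next
    fix A assume "A \<in> sp_group n c"
    then obtain p d where p: "p permutes {..<n}" and d: "d \<in> signs n" and A: "A = spmat n p d"
      and pd: "(\<Prod>j<n. d j) = c p" unfolding sp_group_def by blast
    have ip: "Hilbert_Choice.inv p permutes {..<n}" by (rule permutes_inv[OF p])
    have "c p * c (Hilbert_Choice.inv p) = 1"
      using c_mult[OF p ip] c_id by (simp add: permutes_inv_o(1)[OF p])
    hence "c (Hilbert_Choice.inv p) = c p" using c_pm[OF p p] by (metis minus_minus mult_1 mult_minus1)
    hence "(\<Prod>j<n. d (Hilbert_Choice.inv p j)) = c (Hilbert_Choice.inv p)"
      using prod_permute[OF ip, of d] pd by simp
    thus "inv\<^bsub>GLc n\<^esub> A \<in> sp_group n c"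
      unfolding A spmat_GLc(2)[OF p d] sp_group_def using ip spmat_inverse(3)[OF p d] by blast
  next
    fix A B assume "A \<in> sp_group n c" "B \<in> sp_group n c"
    then obtain p d q e where p: "p permutes {..<n}" and d: "d \<in> signs n" and A: "A = spmat n p d"
      and q: "q permutes {..<n}" and e: "e \<in> signs n" and B: "B = spmat n q e"
      and pd: "(\<Prod>j<n. d j) = c p" and qe: "(\<Prod>j<n. e j) = c q"
      unfolding sp_group_def by blast
    have "(\<Prod>j<n. d (q j) * e j) = c (p \<circ> q)"
      using prod_permute[OF q, of d] pd qe c_mult[OF p q] by (simp add: prod.distrib)
    thus "A \<otimes>\<^bsub>GLc n\<^esub> B \<in> sp_group n c"
      unfolding A B GLc_mult spmat_mult[OF p q] sp_group_def
      using permutes_compose[OF q p] signs_mult[OF q d e] by blast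
  qed
qed

lemma sp_group_is_group: "sign_character n c \<Longrightarrow> group ((GLc n)\<lparr>carrier := sp_group n c\<rparr>)"
  by (rule subgroup.subgroup_is_group[OF sp_group_subgroup GLc_group])

text \<open>Each of the n! permutations carries 2^(n-1) admissible sign vectors.\<close>
lemma card_sp_group:
  assumes n: "n \<ge> 1" and c: "sign_character n c"
  shows "card (sp_group n c) = 2 ^ (n - 1) * fact n"
proof -
  let ?S = "SIGMA p:{p. p permutes {..<n}}. {d \<in> signs n. (\<Prod>j<n. d j) = c p}"
  have img: "sp_group n c = (\<lambda>(p,d). spmat n p d) ` ?S"
    unfolding sp_group_def by auto
  have "inj_on (\<lambda>(p,d). spmat n p d) ?S"
    by (rule inj_onI) (auto simp: spmat_eq_iff)
  hence "card (sp_group n c) = card ?S" unfolding img by (rule card_image)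
  also have "\<dots> = (\<Sum>p | p permutes {..<n}. card {d \<in> signs n. (\<Prod>j<n. d j) = c p})"
    by (rule card_SigmaI) (auto simp: finite_permutations finite_signs)
  also have "\<dots> = (\<Sum>p | p permutes {..<n}. 2 ^ (n - 1))"
    using c by (intro sum.cong) (auto simp: sign_character_def card_signs_with_product[OF n])
  also have "\<dots> = 2 ^ (n - 1) * fact n" by (simp add: card_permutations)
  finally show ?thesis .
qed

subsection \<open>M(n,1,2) is the group of signed permutation matrices of determinant 1\<close>

lemma tau_spmat:
  assumes "s \<noteq> t"
  shows "tau_mat n s t = spmat n (Transposition.transpose s t) (\<lambda>j. if j = t then -1 else 1)"
  by (rule eq_matI) (use assms in \<open>auto simp: tau_mat_def Transposition.transpose_def\<close>)

text \<open>Since det (spmat n p d) = sign p * prod d, determinant 1 means that the sign product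
  equals the sign of the permutation.\<close>
lemma det_one_sp_group:
  "{A. signed_perm_mat n A \<and> det A = 1} = sp_group n (\<lambda>p. of_int (sign p))"
proof -
  have det_one: "det (spmat n p d) = 1 \<longleftrightarrow> (\<Prod>j<n. d j) = of_int (sign p)"
    if "p permutes {..<n}" for p d
    unfolding spmat_det[OF that] by (cases rule: sign_cases[of p]) (auto simp: minus_equation_iff)
  show ?thesis
  proof (rule subset_antisym; rule subsetI)
    fix A assume "A \<in> {A. signed_perm_mat n A \<and> det A = 1}"
    then obtain p d where "p permutes {..<n}" "d \<in> signs n" "A = spmat n p d" "det A = 1"
      unfolding signed_perm_mat_iff by blast
    thus "A \<in> sp_group n (\<lambda>p. of_int (sign p))" unfolding sp_group_def using det_one by blast
  next
    fix A assume "A \<in> sp_group n (\<lambda>p. of_int (sign p))"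
    then obtain p d where "p permutes {..<n}" "d \<in> signs n" "A = spmat n p d"
      "(\<Prod>j<n. d j) = of_int (sign p)"
      unfolding sp_group_def by blast
    thus "A \<in> {A. signed_perm_mat n A \<and> det A = 1}" unfolding signed_perm_mat_iff using det_one by blast
  qed
qed

text \<open>The generators lie in sp_group n sign: the transposition is odd and carries one -1.\<close>
lemma tau_in_sp_group:
  assumes "s < n" "t < n" "s \<noteq> t"
  shows "tau_mat n s t \<in> sp_group n (\<lambda>p. of_int (sign p))"
proof -
  have "Transposition.transpose s t permutes {..<n}" using assms by (intro permutes_swap_id) auto
  moreover have "(\<lambda>j. if j = t then -1 else 1) \<in> signs n" using assms by (auto simp: signs_def)
  moreover have "(\<Prod>j<n. if j = t then -1 else 1 :: complex) = of_int (sign (Transposition.transpose s t))"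
    using assms by (simp add: sign_swap_id)
  ultimately show ?thesis unfolding tau_spmat[OF assms(3)] sp_group_def by blast
qed

lemma M_n12_mult: "A \<in> M_n12 n \<Longrightarrow> B \<in> M_n12 n \<Longrightarrow> A * B \<in> M_n12 n"
  and M_n12_one: "1\<^sub>m n \<in> M_n12 n"
  and M_n12_tau: "s < n \<Longrightarrow> t < n \<Longrightarrow> s \<noteq> t \<Longrightarrow> tau_mat n s t \<in> M_n12 n"
  unfolding M_n12_def
  using generate.eng[of A "GLc n" _ B] generate.one[of "GLc n"] by (auto intro: generate.incl)

lemma M_n12_subset: "M_n12 n \<subseteq> sp_group n (\<lambda>p. of_int (sign p))"
  unfolding M_n12_def
  by (rule group.generate_subgroup_incl[OF GLc_group _ sp_group_subgroup[OF sign_character_sign]])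
     (auto intro: tau_in_sp_group)

text \<open>The square of tau_{s,t,1} is the diagonal matrix negating x_s and x_t; products of
  such squares give every diagonal matrix with an even number of -1's.\<close>
lemma diagonal_in_M_n12:
  assumes "N \<subseteq> {..<n}" "even (card N)"
  shows "spmat n id (\<lambda>j. if j \<in> N then -1 else 1) \<in> M_n12 n"
  using assms
proof (induction "card N" arbitrary: N rule: less_induct)
  case less
  have fin: "finite N" using less.prems(1) finite_subset by blast
  show ?case
  proof (cases "N = {}")
    case True
    thus ?thesis using M_n12_one by (simp add: spmat_id)
  next
    case False
    hence "card N \<noteq> 0" using fin by simp
    hence two: "card N \<ge> 2" using less.prems(2) by presburger
    then obtain s t where st: "s \<in> N" "t \<in> N" "s \<noteq> t"
      by (metis One_nat_def card_le_Suc0_iff_eq not_less_eq_eq numeral_2_eq_2 fin)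
    have s: "s < n" and t: "t < n" using st less.prems(1) by auto
    have tp: "Transposition.transpose s t permutes {..<n}" using s t by (intro permutes_swap_id) auto
    have card_less: "card (N - {s, t}) < card N" and even_rest: "even (card (N - {s, t}))"
      using st fin two less.prems(2) by (auto simp: card_Diff_subset)
    have rest: "spmat n id (\<lambda>j. if j \<in> N - {s, t} then -1 else 1) \<in> M_n12 n"
      using less.hyps[OF card_less _ even_rest] less.prems(1) by blast
    have tau_sq: "tau_mat n s t * tau_mat n s t \<in> M_n12 n"
      using M_n12_mult M_n12_tau[OF s t st(3)] by blast
    have "tau_mat n s t * tau_mat n s t = spmat n id (\<lambda>j. if j = s \<or> j = t then -1 else 1)"
      unfolding tau_spmat[OF st(3)] spmat_mult[OF tp tp] using st(3)
      by (auto simp: Transposition.transpose_def intro!: arg_cong[where f = "spmat n id"])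
    moreover have "spmat n id (\<lambda>j. if j \<in> N - {s, t} then -1 else 1)
        * spmat n id (\<lambda>j. if j = s \<or> j = t then -1 else 1)
      = spmat n id (\<lambda>j. if j \<in> N then -1 else 1)"
      unfolding spmat_mult[OF permutes_id permutes_id]
      using st by (auto intro!: arg_cong[where f = "spmat n id"])
    ultimately show ?thesis using M_n12_mult[OF rest tau_sq] by simp
  qed
qed

lemma permutation_in_M_n12:
  assumes "p permutes {..<n}"
  shows "\<exists>d\<in>signs n. spmat n p d \<in> M_n12 n"
  using assms finite_lessThan[of n]
proof (induction p rule: permutes_induct)
  case id
  have "spmat n id (\<lambda>_. 1) \<in> M_n12 n" using M_n12_one by (simp add: spmat_id)
  thus ?case using signs_one by blast
next
  case (swap a b p)
  then obtain d where d: "d \<in> signs n" and pd: "spmat n p d \<in> M_n12 n" by blast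
  have tp: "Transposition.transpose a b permutes {..<n}" using swap by (intro permutes_swap_id) auto
  have p: "p permutes {..<n}" using swap by blast
  have e: "(\<lambda>j. if j = b then -1 else 1) \<in> signs n" using swap by (auto simp: signs_def)
  show ?case
  proof (cases "a = b")
    case True
    thus ?thesis using d pd by auto
  next
    case False
    have "tau_mat n a b * spmat n p d
      = spmat n (Transposition.transpose a b \<circ> p) (\<lambda>j. (if p j = b then -1 else 1) * d j)"
      unfolding tau_spmat[OF False] spmat_mult[OF tp p] ..
    moreover have "tau_mat n a b * spmat n p d \<in> M_n12 n"
      using M_n12_mult M_n12_tau pd swap False by auto
    ultimately show ?thesis using signs_mult[OF p e d] by (force simp: o_def)
  qed
qed

text \<open>Conversely, a signed permutation matrix with sign product sign p is a product of tau's
  realising p (up to signs) and a diagonal correction with an even number of -1's.\<close>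
theorem M_n12_eq: "M_n12 n = sp_group n (\<lambda>p. of_int (sign p))"
proof
  show "M_n12 n \<subseteq> sp_group n (\<lambda>p. of_int (sign p))" by (rule M_n12_subset)
  show "sp_group n (\<lambda>p. of_int (sign p)) \<subseteq> M_n12 n"
  proof
    fix A assume "A \<in> sp_group n (\<lambda>p. of_int (sign p))"
    then obtain p d where p: "p permutes {..<n}" and d: "d \<in> signs n" and A: "A = spmat n p d"
      and pd: "(\<Prod>j<n. d j) = of_int (sign p)" unfolding sp_group_def by blast
    obtain d' where d': "d' \<in> signs n" and pd': "spmat n p d' \<in> M_n12 n"
      using permutation_in_M_n12[OF p] by blast
    have "spmat n p d' \<in> sp_group n (\<lambda>p. of_int (sign p))" using M_n12_subset pd' by blast
    hence "(\<Prod>j<n. d' j) = of_int (sign p)" by (simp add: spmat_in_sp_group_iff[OF p d'])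
    define e where "e = (\<lambda>j. d' j * d j)"
    have e: "e \<in> signs n" unfolding e_def using signs_mult[OF permutes_id d' d] by simp
    have "(\<Prod>j<n. e j) = of_int (sign p) * of_int (sign p)"
      unfolding e_def prod.distrib pd \<open>(\<Prod>j<n. d' j) = of_int (sign p)\<close> ..
    also have "\<dots> = 1" by (cases rule: sign_cases[of p]) auto
    finally have "even (card {j. j < n \<and> e j = -1})"
      using prod_signs_eq_one_iff[OF e] by simp
    moreover have "(\<lambda>j. if j \<in> {j. j < n \<and> e j = -1} then -1 else 1) = e"
      using signs_values[OF e] signs_outside[OF e] by (force simp: not_less)
    ultimately have "spmat n id e \<in> M_n12 n"
      using diagonal_in_M_n12[of "{j. j < n \<and> e j = -1}" n] by auto
    hence "spmat n p d' * spmat n id e \<in> M_n12 n" by (rule M_n12_mult[OF pd'])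
    moreover have "spmat n p d' * spmat n id e = A"
      unfolding spmat_mult[OF p permutes_id] A e_def
      by (auto simp: mult.assoc[symmetric] signs_square[OF d'])
    ultimately show "A \<in> M_n12 n" by simp
  qed
qed

subsection \<open>G(2,2,n) consists of the signed permutation matrices with sign product 1\<close>

lemma diagonal_spmat:
  "mat n n (\<lambda>(i,j). if i = j then d i else 0) = spmat n id (\<lambda>j. if j < n then d j else 1)"
  by (rule eq_matI) auto

lemma perm_matrix_spmat: "perm_matrix n p = spmat n p (\<lambda>_. 1)"
  by (rule eq_matI) (auto simp: perm_matrix_def)

text \<open>D P with an even number of -1's in D is spmat n p (d \<circ> p) with sign product 1, and
  conversely the signs of spmat n p d can be moved to the left of the permutation matrix.\<close>
theorem G22n_eq: "G22n n = sp_group n (\<lambda>_. 1)"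
proof (rule subset_antisym; rule subsetI)
  fix X assume "X \<in> G22n n"
  then obtain d p where d: "\<forall>i<n. d i \<in> {1, -1}" and ev: "even (card {i. i < n \<and> d i = -1})"
    and p: "p permutes {..<n}"
    and X: "X = mat n n (\<lambda>(i,j). if i = j then d i else 0) * perm_matrix n p"
    unfolding G22n_def by blast
  define d' where "d' = (\<lambda>j. if j < n then d j else 1)"
  have d': "d' \<in> signs n" unfolding d'_def signs_def using d by auto
  have "{j. j < n \<and> d' j = -1} = {i. i < n \<and> d i = -1}" unfolding d'_def by auto
  hence "(\<Prod>j<n. d' j) = 1" using prod_signs_eq_one_iff[OF d'] ev by simp
  hence "(\<Prod>j<n. d' (p j) * 1) = 1" by (simp add: prod_permute[OF p])
  moreover have "X = spmat n p (\<lambda>j. d' (p j) * 1)"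
    unfolding X diagonal_spmat perm_matrix_spmat spmat_mult[OF permutes_id p] d'_def by simp
  ultimately show "X \<in> sp_group n (\<lambda>_. 1)"
    unfolding sp_group_def using p signs_mult[OF p d' signs_one] by blast
next
  fix X assume "X \<in> sp_group n (\<lambda>_. 1)"
  then obtain p d where p: "p permutes {..<n}" and d: "d \<in> signs n" and X: "X = spmat n p d"
    and pd: "(\<Prod>j<n. d j) = 1" unfolding sp_group_def by blast
  define d' where "d' = (\<lambda>i. d (Hilbert_Choice.inv p i))"
  have d': "d' \<in> signs n" unfolding d'_def by (rule spmat_inverse(3)[OF p d])
  have "(\<Prod>j<n. d' j) = 1"
    unfolding d'_def using prod_permute[OF permutes_inv[OF p], of d] pd by simp
  hence ev: "even (card {i. i < n \<and> d' i = -1})" using prod_signs_eq_one_iff[OF d'] by simp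
  have "(\<lambda>j. if j < n then d' j else 1) = d'" using signs_outside[OF d'] by (auto simp: fun_eq_iff)
  moreover have "(\<lambda>j. d' (p j) * 1) = d"
  proof
    fix j show "d' (p j) * 1 = d j"
      unfolding d'_def using permutes_inverses(2)[OF p] by simp
  qed
  ultimately have "mat n n (\<lambda>(i,j). if i = j then d' i else 0) * perm_matrix n p = X"
    unfolding diagonal_spmat perm_matrix_spmat X by (simp only: spmat_mult[OF permutes_id p] id_comp)
  moreover have "\<forall>i<n. d' i \<in> {1, -1}" using signs_values[OF d'] by auto
  ultimately show "X \<in> G22n n" unfolding G22n_def using ev p by blast
qed

subsection \<open>For odd n, X \<mapsto> det X \<cdot> X is an isomorphism G(2,2,n) \<rightarrow> M(n,1,2)\<close>

lemma det_scaled_mult: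
  assumes "X \<in> carrier_mat n n" "Y \<in> carrier_mat n n"
  shows "det (X * Y) \<cdot>\<^sub>m (X * Y) = (det X \<cdot>\<^sub>m X) * (det Y \<cdot>\<^sub>m Y)"
proof -
  have "(det X \<cdot>\<^sub>m X) * (det Y \<cdot>\<^sub>m Y) = det X \<cdot>\<^sub>m (det Y \<cdot>\<^sub>m (X * Y))"
    using assms by (simp add: mult_smult_assoc_mat[of _ n n _ n] mult_smult_distrib)
  also have "\<dots> = (det X * det Y) \<cdot>\<^sub>m (X * Y)" by (rule eq_matI) auto
  finally show ?thesis using assms by (simp add: det_mult)
qed

lemma det_rescale_spmat:
  assumes p: "p permutes {..<n}" and pd: "(\<Prod>j<n. d j) = 1"
  shows "det (spmat n p d) \<cdot>\<^sub>m spmat n p d = spmat n p (\<lambda>j. if j < n then of_int (sign p) * d j else 1)"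
  by (simp add: spmat_det[OF p] pd spmat_smult)

lemma sign_rescaled_signs:
  assumes d: "d \<in> signs n"
  shows "(\<lambda>j. if j < n then of_int (sign p) * d j else 1) \<in> signs n"
proof -
  have "of_int (sign p) = (1::complex) \<or> of_int (sign p) = (-1::complex)"
    by (cases rule: sign_cases[of p]) auto
  thus ?thesis using signs_values[OF d] by (force simp: signs_def)
qed

text \<open>For odd n the rescaled sign product is sign p ^ n * 1 = sign p, so the rescaling maps
  G(2,2,n) into M(n,1,2).\<close>
lemma det_rescale_into:
  assumes odd: "odd n" and X: "X \<in> sp_group n (\<lambda>_. 1)"
  shows "det X \<cdot>\<^sub>m X \<in> sp_group n (\<lambda>p. of_int (sign p))"
proof -
  obtain p d where p: "p permutes {..<n}" and d: "d \<in> signs n" and pd: "(\<Prod>j<n. d j) = 1"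
    and X_eq: "X = spmat n p d" using X unfolding sp_group_def by blast
  have "(\<Prod>j<n. if j < n then of_int (sign p) * d j else 1) = (of_int (sign p) :: complex) ^ n"
    by (simp add: prod.distrib pd)
  also have "\<dots> = of_int (sign p)" using odd by (cases rule: sign_cases[of p]) simp_all
  finally show ?thesis
    unfolding X_eq det_rescale_spmat[OF p pd]
    using spmat_in_sp_group_iff[OF p sign_rescaled_signs[OF d]] by blast
qed

text \<open>The rescaling is injective on G(2,2,n): it keeps the permutation, and the signs are
  recovered by dividing by sign p.\<close>
lemma det_rescale_inj: "inj_on (\<lambda>X. det X \<cdot>\<^sub>m X) (sp_group n (\<lambda>_. 1))"
proof (rule inj_onI)
  fix X Y assume "X \<in> sp_group n (\<lambda>_. 1)" "Y \<in> sp_group n (\<lambda>_. 1)"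
    and eq: "det X \<cdot>\<^sub>m X = det Y \<cdot>\<^sub>m Y"
  then obtain p d q e where p: "p permutes {..<n}" and d: "d \<in> signs n" and pd: "(\<Prod>j<n. d j) = 1"
    and q: "q permutes {..<n}" and e: "e \<in> signs n" and qe: "(\<Prod>j<n. e j) = 1"
    and X: "X = spmat n p d" and Y: "Y = spmat n q e" unfolding sp_group_def by blast
  have pq: "p = q" and scaled: "(\<lambda>j. if j < n then of_int (sign p) * d j else 1)
                = (\<lambda>j. if j < n then of_int (sign q) * e j else (1::complex))"
    using eq unfolding X Y det_rescale_spmat[OF p pd] det_rescale_spmat[OF q qe]
    by (simp_all add: spmat_eq_iff[OF p q sign_rescaled_signs[OF d] sign_rescaled_signs[OF e]])
  have "d j = e j" for j
  proof (cases "j < n")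
    case True
    thus ?thesis using fun_cong[OF scaled, of j] pq by (simp add: sign_def split: if_splits)
  qed (simp add: signs_outside[OF d] signs_outside[OF e])
  thus "X = Y" using X Y pq by auto
qed

text \<open>For odd n, X \<mapsto> det X \<cdot> X is a bijective homomorphism G(2,2,n) \<rightarrow> M(n,1,2); surjectivity
  follows from injectivity since both groups have 2^(n-1) n! elements.\<close>
theorem iso_odd:
  assumes odd: "odd n"
  shows "(GLc n)\<lparr>carrier := sp_group n (\<lambda>p. of_int (sign p))\<rparr> \<cong> (GLc n)\<lparr>carrier := sp_group n (\<lambda>_. 1)\<rparr>"
proof -
  let ?M = "sp_group n (\<lambda>p. of_int (sign p))" and ?G = "sp_group n (\<lambda>_. 1)"
  let ?\<phi> = "\<lambda>X::complex mat. det X \<cdot>\<^sub>m X"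
  have n: "n \<ge> 1" using odd by (cases n) auto
  have "?\<phi> ` ?G = ?M"
    using det_rescale_into[OF odd] card_image[OF det_rescale_inj]
      card_sp_group[OF n sign_character_sign] card_sp_group[OF n sign_character_trivial]
    by (intro card_subset_eq) (auto intro: card_ge_0_finite)
  moreover have "?\<phi> (X * Y) = ?\<phi> X * ?\<phi> Y" if "X \<in> ?G" "Y \<in> ?G" for X Y
    using that by (auto intro: det_scaled_mult[of _ n] dest: sp_group_carrier_mat)
  ultimately have "?\<phi> \<in> iso ((GLc n)\<lparr>carrier := ?G\<rparr>) ((GLc n)\<lparr>carrier := ?M\<rparr>)"
    unfolding iso_def hom_def bij_betw_def using det_rescale_inj by auto
  thus ?thesis
    by (intro group.iso_sym[OF sp_group_is_group[OF sign_character_trivial]] is_isoI)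
qed

subsection \<open>For even n, -1 has an n-th root in M(n,1,2) but not in G(2,2,n)\<close>

lemma prod_lessThan_double:
  fixes h :: nat
  shows "(\<Prod>i<h + h. f i) = (\<Prod>i<h. f i) * (\<Prod>i<h. f (i + h))"
proof -
  have "(\<Prod>i<h + h. f i) = prod f {0..<h} * prod f {0 + h..<h + h}"
    by (simp add: atLeast0LessThan[symmetric] prod.atLeastLessThan_concat)
  also have "prod f {0 + h..<h + h} = (\<Prod>i<h. f (i + h))"
    by (simp only: prod.shift_bounds_nat_ivl atLeast0LessThan)
  finally show ?thesis by (simp add: atLeast0LessThan)
qed

text \<open>Suppose that, for k = 2^a, the k-th power of
  spmat n p d is -1: every point has p-period dividing k and the signs along its first k steps
  multiply to -1. Then every point has exact period k, since a shorter period would divide k/2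
  and make that product a square, hence 1.\<close>
lemma exact_period_of_two_power_root:
  assumes p: "p permutes {..<n}" and d: "d \<in> signs n" and j: "j < n"
    and period: "(p ^^ 2 ^ a) j = j"
    and orbit_signs: "(\<Prod>i<2 ^ a. d ((p ^^ i) j)) = -1"
  shows "least_power p j = 2 ^ a"
proof (rule ccontr)
  assume ne: "least_power p j \<noteq> 2 ^ a"
  obtain b where "b \<le> a" "least_power p j = 2 ^ b"
    using least_power_minimal[OF period] divides_primepow_nat[of 2] by auto
  with ne have a: "a \<ge> 1" and "least_power p j dvd 2 ^ (a - 1)"
    by (auto intro: le_imp_power_dvd)
  hence half_period: "(p ^^ 2 ^ (a - 1)) j = j"
    using least_power_dvd[OF permutes_imp_permutation[OF finite_lessThan p]] by blast
  let ?h = "2 ^ (a - 1) :: nat"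
  have k: "2 ^ a = ?h + ?h" using a by (cases a) auto
  have "(\<Prod>i<2 ^ a. d ((p ^^ i) j)) = (\<Prod>i<?h. d ((p ^^ i) j)) * (\<Prod>i<?h. d ((p ^^ (i + ?h)) j))"
    unfolding k by (rule prod_lessThan_double)
  also have "(\<lambda>i. d ((p ^^ (i + ?h)) j)) = (\<lambda>i. d ((p ^^ i) j))"
    using half_period by (simp add: funpow_add)
  also have "(\<Prod>i<?h. d ((p ^^ i) j)) * (\<Prod>i<?h. d ((p ^^ i) j)) = 1"
    by (rule prod_square_eq_one) (rule signs_square[OF d])
  finally show False using orbit_signs by simp
qed

text \<open>Under the same hypotheses the p-orbits, all of size k, partition {..<n}, and each of
  them contributes -1 to the total sign product.\<close>
lemma sign_product_of_two_power_root:
  assumes p: "p permutes {..<n}" and d: "d \<in> signs n"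
    and period: "\<And>j. j < n \<Longrightarrow> (p ^^ 2 ^ a) j = j"
    and orbit_signs: "\<And>j. j < n \<Longrightarrow> (\<Prod>i<2 ^ a. d ((p ^^ i) j)) = -1"
  shows "(\<Prod>j<n. d j) = (-1) ^ (n div 2 ^ a)"
proof -
  let ?k = "2 ^ a :: nat"
  have perm: "permutation p" by (rule permutes_imp_permutation[OF finite_lessThan p])
  have least: "least_power p j = ?k" if "j < n" for j
    by (rule exact_period_of_two_power_root[OF p d that period[OF that] orbit_signs[OF that]])
  define orbit where "orbit j = set (support p j)" for j
  have orbit_eq: "orbit j = (\<lambda>i. (p ^^ i) j) ` {..<?k}" if "j < n" for j
    using least[OF that] by (auto simp: orbit_def atLeast0LessThan)
  have orbit_inj: "inj_on (\<lambda>i. (p ^^ i) j) {..<?k}" if "j < n" for j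
    using cycle_of_permutation[OF perm, of j] least[OF that]
    by (simp add: distinct_map atLeast0LessThan)
  have orbit_card: "card (orbit j) = ?k" and orbit_prod: "(\<Prod>x\<in>orbit j. d x) = -1"
    if "j < n" for j
    using card_image[OF orbit_inj[OF that]] prod.reindex[OF orbit_inj[OF that], of d]
      orbit_signs[OF that] by (simp_all add: orbit_eq[OF that] o_def)
  let ?C = "orbit ` {..<n}"
  have union: "\<Union>?C = {..<n}"
  proof
    show "\<Union>?C \<subseteq> {..<n}"
      using permutes_lessThan[OF permutes_funpow[OF p]] by (auto simp: orbit_eq)
    show "{..<n} \<subseteq> \<Union>?C"
    proof
      fix j assume j: "j \<in> {..<n}"
      have "(p ^^ 0) j \<in> (\<lambda>i. (p ^^ i) j) ` {..<?k}" by (rule imageI) simp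
      hence "j \<in> orbit j" using j by (simp add: orbit_eq)
      thus "j \<in> \<Union>?C" using j by blast
    qed
  qed
  have disjoint: "\<forall>A\<in>?C. \<forall>B\<in>?C. A \<noteq> B \<longrightarrow> A \<inter> B = {}"
    using pairwise_subset[OF disjoint_support[OF perm], of ?C]
    by (auto simp: orbit_def pairwise_def disjnt_def)
  have fin: "finite ?C" "\<forall>A\<in>?C. finite A" by (auto simp: orbit_def)
  have "?k * card ?C = card (\<Union>?C)"
    by (rule card_partition) (use fin disjoint orbit_card union in auto)
  hence card_C: "card ?C = n div ?k"
    using union nonzero_mult_div_cancel_left[of ?k "card ?C"] by simp
  have "(\<Prod>j<n. d j) = (\<Prod>A\<in>?C. \<Prod>x\<in>A. d x)"
    using prod.Union_disjoint[OF fin(2) disjoint, of d] union by (simp add: o_def)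
  also have "\<dots> = (\<Prod>A\<in>?C. -1)" using orbit_prod by (intro prod.cong) auto
  finally show ?thesis using card_C by simp
qed

text \<open>Write n = 2^a q with q odd. An n-th root g of -1 in G(2,2,n) would give the root
  h = g^q of -1 of order 2^a, whose sign product is then (-1)^q = -1 by the lemma above,
  contradicting h \<in> G(2,2,n).\<close>
lemma no_nth_root_of_neg_one:
  assumes n: "n \<ge> 1" and g: "g \<in> sp_group n (\<lambda>_. 1)"
  shows "g ^\<^sub>m n \<noteq> - 1\<^sub>m n"
proof
  assume root: "g ^\<^sub>m n = - 1\<^sub>m n"
  let ?G = "(GLc n)\<lparr>carrier := sp_group n (\<lambda>_. 1)\<rparr>"
  interpret G: group ?G by (rule sp_group_is_group[OF sign_character_trivial])
  obtain q where nq: "n = 2 ^ multiplicity 2 n * q" and q: "odd q"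
    using multiplicity_decompose'[of n 2] n by auto
  let ?k = "2 ^ multiplicity 2 n :: nat"
  have gc: "g \<in> carrier_mat n n" using g by (auto simp: sp_group_def)
  have "g ^\<^sub>m q \<in> sp_group n (\<lambda>_. 1)"
    using G.nat_pow_closed[of g q] g gc by (simp add: subgroup_pow)
  then obtain P E where P: "P permutes {..<n}" and E: "E \<in> signs n"
    and h: "g ^\<^sub>m q = spmat n P E" and prodE: "(\<Prod>j<n. E j) = 1"
    unfolding sp_group_def by blast
  have "spmat n P E ^\<^sub>m ?k = g ^\<^sub>m (q * ?k)"
    using G.nat_pow_pow[of g q ?k] g gc by (simp add: subgroup_pow h)
  also have "\<dots> = - 1\<^sub>m n" using root nq by (simp add: mult.commute)
  finally have pow: "spmat n (P ^^ ?k) (\<lambda>j. \<Prod>i<?k. E ((P ^^ i) j)) = - 1\<^sub>m n"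
    by (simp add: spmat_pow[OF P])
  have "(P ^^ ?k) j = j \<and> (\<Prod>i<?k. E ((P ^^ i) j)) = -1" if "j < n" for j
    using arg_cong[OF pow, of "\<lambda>A. A $$ (j, j)"] that by (simp split: if_splits)
  hence "(\<Prod>j<n. E j) = (-1) ^ (n div ?k)"
    by (intro sign_product_of_two_power_root[OF P E]) auto
  also have "n div ?k = q" by (metis nq nonzero_mult_div_cancel_left power_not_zero zero_neq_numeral)
  finally show False using prodE q by simp
qed

text \<open>For n \<ge> 3, a signed permutation matrix commuting with every diagonal matrix of
  G(2,2,n) is diagonal: if p j \<noteq> j, the matrix negating x_j and a third coordinate x_k would
  be conjugated to one negating x_(p j) instead.\<close>
lemma commuting_with_diagonals:
  assumes n: "n \<ge> 3" and p: "p permutes {..<n}" and d: "d \<in> signs n"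
    and commute: "\<And>e. e \<in> signs n \<Longrightarrow> (\<Prod>j<n. e j) = 1 \<Longrightarrow>
      spmat n p d * spmat n id e = spmat n id e * spmat n p d"
  shows "p = id"
proof
  fix j show "p j = id j"
  proof (rule ccontr)
    assume pj: "p j \<noteq> id j"
    hence j: "j < n" using permutes_not_in[OF p, of j] by (cases "j < n") auto
    have "card {j, p j} \<le> 2" by (simp add: card_insert_if)
    hence "\<not> {..<n} \<subseteq> {j, p j}" using n card_mono[of "{j, p j}" "{..<n}"] by auto
    then obtain k where k: "k < n" "k \<noteq> j" "k \<noteq> p j" by auto
    define f where "f = (\<lambda>x. if x \<in> {j, k} then -1 else (1::complex))"
    have f: "f \<in> signs n" using j k by (auto simp: f_def signs_def)
    have "{x. x < n \<and> f x = -1} = {j, k}" using j k by (auto simp: f_def)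
    hence "(\<Prod>x<n. f x) = 1" using prod_signs_eq_one_iff[OF f] k by simp
    hence "spmat n p (\<lambda>x. d x * f x) = spmat n p (\<lambda>x. f (p x) * d x)"
      using commute[OF f] by (simp add: spmat_mult[OF p permutes_id] spmat_mult[OF permutes_id p])
    hence "(\<lambda>x. d x * f x) = (\<lambda>x. f (p x) * d x)"
      using spmat_eq_iff[OF p p signs_mult[OF permutes_id d f] signs_mult[OF p f d]] by simp
    hence "d j * f j = f (p j) * d j" by (rule fun_cong)
    moreover have "f j = -1" "f (p j) = 1" using k pj by (auto simp: f_def)
    ultimately show False using signs_nonzero[OF d, of j] by simp
  qed
qed

text \<open>For n \<ge> 3 the centre of G(2,2,n) is {1, -1}: a central element is diagonal by the previous
  lemma, and commuting with the permutation matrices forces all its signs to be equal.\<close>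
lemma centre_G22:
  assumes n: "n \<ge> 3" and z: "z \<in> sp_group n (\<lambda>_. 1)"
    and central: "\<forall>y\<in>sp_group n (\<lambda>_. 1). z * y = y * z"
  shows "z = 1\<^sub>m n \<or> z = - 1\<^sub>m n"
proof -
  obtain p d where p: "p permutes {..<n}" and d: "d \<in> signs n" and z_eq: "z = spmat n p d"
    using z unfolding sp_group_def by blast
  have commute: "spmat n p d * spmat n q e = spmat n q e * spmat n p d"
    if "q permutes {..<n}" "e \<in> signs n" "(\<Prod>j<n. e j) = 1" for q e
  proof -
    have "spmat n q e \<in> sp_group n (\<lambda>_. 1)" using that unfolding sp_group_def by blast
    thus ?thesis using central unfolding z_eq by blast
  qed
  have p_eq: "p = id" by (rule commuting_with_diagonals[OF n p d commute[OF permutes_id]])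
  have d_const: "d j = d 0" if j: "j < n" for j
  proof -
    let ?t = "Transposition.transpose 0 j"
    have t: "?t permutes {..<n}" using j n by (intro permutes_swap_id) auto
    have "spmat n ?t (\<lambda>x. d (?t x) * 1) = spmat n ?t (\<lambda>x. 1 * d x)"
      using commute[OF t signs_one] by (simp add: p_eq spmat_mult[OF permutes_id t] spmat_mult[OF t permutes_id])
    hence "(\<lambda>x. d (?t x) * 1) = (\<lambda>x. 1 * d x)"
      using spmat_eq_iff[OF t t signs_mult[OF t d signs_one] signs_mult[OF permutes_id signs_one d]]
      by simp
    hence "d (?t 0) * 1 = 1 * d 0" by (rule fun_cong)
    thus ?thesis by simp
  qed
  have "d 0 = 1 \<or> d 0 = -1" using signs_values[OF d, of 0] n by simp
  thus ?thesis
  proof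
    assume "d 0 = 1"
    thus ?thesis unfolding z_eq p_eq using d_const by (intro disjI1 eq_matI) auto
  next
    assume "d 0 = -1"
    thus ?thesis unfolding z_eq p_eq using d_const by (intro disjI2 eq_matI) auto
  qed
qed

lemma G22_2_square:
  assumes g: "g \<in> sp_group 2 (\<lambda>_. 1)"
  shows "g ^\<^sub>m 2 = 1\<^sub>m 2"
proof -
  obtain p d where p: "p permutes {..<2}" and d: "d \<in> signs 2" and g_eq: "g = spmat 2 p d"
    and pd: "(\<Prod>j<2. d j) = 1" using g unfolding sp_group_def by blast
  have d01: "d 0 * d 1 = 1" "d 1 * d 0 = 1" using pd by (simp_all add: numeral_2_eq_2 mult.commute)
  have "p 0 < 2" "p 1 < 2" "p 0 \<noteq> p 1"
    using permutes_lessThan[OF p] permutes_inj[OF p] by (auto dest: injD)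
  hence p01: "(p 0 = 0 \<and> p 1 = 1) \<or> (p 0 = 1 \<and> p 1 = 0)" by auto
  have "p (p x) = x \<and> d (p x) * d x = 1" for x
  proof (cases "x < 2")
    case True
    hence "x = 0 \<or> x = 1" by auto
    thus ?thesis using p01 d01 signs_square[OF d] by auto
  next
    case False
    thus ?thesis using permutes_not_in[OF p, of x] signs_outside[OF d, of x] by simp
  qed
  hence "p \<circ> p = id" "(\<lambda>j. d (p j) * d j) = (\<lambda>_. 1)" by auto
  moreover have "g ^\<^sub>m 2 = g * g" using g_eq by (simp add: numeral_2_eq_2)
  ultimately show ?thesis unfolding g_eq spmat_mult[OF p p] by (simp add: spmat_id)
qed

lemma G22_central_nth_power:
  assumes even: "even n" and n: "n \<ge> 2" and g: "g \<in> sp_group n (\<lambda>_. 1)"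
    and central: "\<forall>y\<in>sp_group n (\<lambda>_. 1). g ^\<^sub>m n * y = y * g ^\<^sub>m n"
  shows "g ^\<^sub>m n = 1\<^sub>m n"
proof (cases "n = 2")
  case True
  thus ?thesis using G22_2_square g by simp
next
  case False
  interpret G: group "(GLc n)\<lparr>carrier := sp_group n (\<lambda>_. 1)\<rparr>"
    by (rule sp_group_is_group[OF sign_character_trivial])
  have "g \<in> carrier_mat n n" using g by (auto simp: sp_group_def)
  hence "g ^\<^sub>m n \<in> sp_group n (\<lambda>_. 1)"
    using G.nat_pow_closed[of g n] g by (simp add: subgroup_pow)
  thus ?thesis
    using centre_G22[OF _ _ central] no_nth_root_of_neg_one[OF _ g] n False by force
qed

definition rot :: "nat \<Rightarrow> nat \<Rightarrow> nat" where
  "rot n j = (if j < n then Suc j mod n else j)"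

text \<open>The rotation of {..<n+1} is the rotation of {..<n} after a transposition; by induction
  this gives that rot n permutes {..<n} with sign (-1)^(n-1).\<close>
lemma rot_Suc: "n \<ge> 1 \<Longrightarrow> rot (Suc n) = rot n \<circ> Transposition.transpose (n - 1) n"
  by (rule ext) (auto simp: rot_def Transposition.transpose_def mod_Suc)

lemma rot_permutes: "n \<ge> 1 \<Longrightarrow> rot n permutes {..<n} \<and> sign (rot n) = (-1) ^ (n - 1)"
proof (induction n rule: dec_induct[of 1])
  case base
  have "rot 1 = id" by (rule ext) (simp add: rot_def)
  hence "rot 1 permutes {..<1}" and "sign (rot 1) = 1" by (simp_all only: permutes_id sign_id)
  thus ?case by simp
next
  case (step n)
  let ?t = "Transposition.transpose (n - 1) n"
  have t: "?t permutes {..<Suc n}" using step by (intro permutes_swap_id) auto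
  have r: "rot n permutes {..<Suc n}" using step permutes_subset[of "rot n" "{..<n}"] by auto
  have "rot (Suc n) permutes {..<Suc n}" unfolding rot_Suc[OF step(1)] by (rule permutes_compose[OF t r])
  moreover have "sign (rot (Suc n)) = (-1) ^ (Suc n - 1)"
    unfolding rot_Suc[OF step(1)]
    using step sign_compose[OF permutes_imp_permutation[OF _ r] permutes_imp_permutation[OF _ t]]
      sign_swap_id[of "n - 1" n]
    by (cases n) auto
  ultimately show ?case ..
qed

lemma rot_funpow: "j < n \<Longrightarrow> (rot n ^^ i) j = (j + i) mod n"
proof (induction i)
  case (Suc i)
  have "(j + i) mod n < n" using Suc by simp
  thus ?case using Suc by (simp add: rot_def mod_Suc_eq)
qed simp

lemma rot_funpow_outside: "n \<le> j \<Longrightarrow> (rot n ^^ i) j = j"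
  by (induction i) (auto simp: rot_def)

lemma rot_orbit_prod:
  assumes j: "j < n"
  shows "(\<Prod>i<n. d ((rot n ^^ i) j)) = (\<Prod>i<n. d i)"
proof -
  have shift_inj: "x = y"
    if "x < n" "y < n" "x \<le> y" "(j + x) mod n = (j + y) mod n" for x y
  proof -
    have "n dvd y - x" using that mod_eq_dvd_iff_nat[of "j + x" "j + y" n] by simp
    show "x = y"
    proof (rule ccontr)
      assume "x \<noteq> y"
      hence "0 < y - x" "y - x < n" using that by auto
      thus False using nat_dvd_not_less \<open>n dvd y - x\<close> by blast
    qed
  qed
  have inj: "inj_on (\<lambda>i. (j + i) mod n) {..<n}"
    by (rule inj_onI) (metis lessThan_iff nat_le_linear shift_inj)
  have "(\<lambda>i. (j + i) mod n) ` {..<n} = {..<n}"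
    by (rule endo_inj_surj[OF finite_lessThan _ inj]) (use j in auto)
  thus ?thesis
    using prod.reindex[OF inj, of d] by (simp add: rot_funpow[OF j] o_def)
qed

lemma rot_root_of_neg_one:
  assumes n: "n \<ge> 1" and even: "even n"
  defines "c \<equiv> spmat n (rot n) (\<lambda>j. if j = 0 then -1 else 1)"
  shows "c \<in> sp_group n (\<lambda>p. of_int (sign p))" and "c ^\<^sub>m n = - 1\<^sub>m n"
proof -
  let ?d = "\<lambda>j. if j = 0 then -1 else (1::complex)"
  have r: "rot n permutes {..<n}" and sr: "sign (rot n) = (-1) ^ (n - 1)"
    using rot_permutes[OF n] by auto
  have d: "?d \<in> signs n" using n by (auto simp: signs_def)
  have prod_d: "(\<Prod>j<n. ?d j) = -1" using n by simp
  have "sign (rot n) = -1" using sr n even by simp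
  hence "(\<Prod>j<n. ?d j) = of_int (sign (rot n))" using prod_d by simp
  thus "c \<in> sp_group n (\<lambda>p. of_int (sign p))"
    unfolding c_def sp_group_def using r d by blast
  have "rot n ^^ n = id"
  proof
    fix j show "(rot n ^^ n) j = id j"
      by (cases "j < n") (simp_all add: rot_funpow rot_funpow_outside)
  qed
  moreover have "(\<lambda>j. \<Prod>i<n. ?d ((rot n ^^ i) j)) = (\<lambda>j. if j < n then -1 else 1)"
    using rot_orbit_prod[of _ n ?d] prod_d by (auto simp: rot_funpow_outside fun_eq_iff)
  ultimately show "c ^\<^sub>m n = - 1\<^sub>m n"
    unfolding c_def spmat_pow[OF r] by (simp add: spmat_neg_id)
qed

lemma iso_central_power:
  fixes k :: nat
  assumes G: "group G" and H: "group H" and f: "f \<in> iso G H" and x: "x \<in> carrier G"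
    and nontrivial: "x [^]\<^bsub>G\<^esub> k \<noteq> \<one>\<^bsub>G\<^esub>"
    and central: "\<forall>y\<in>carrier G. x [^]\<^bsub>G\<^esub> k \<otimes>\<^bsub>G\<^esub> y = y \<otimes>\<^bsub>G\<^esub> x [^]\<^bsub>G\<^esub> k"
  shows "f x [^]\<^bsub>H\<^esub> k \<noteq> \<one>\<^bsub>H\<^esub>"
    and "\<forall>y\<in>carrier H. f x [^]\<^bsub>H\<^esub> k \<otimes>\<^bsub>H\<^esub> y = y \<otimes>\<^bsub>H\<^esub> f x [^]\<^bsub>H\<^esub> k"
proof -
  interpret G: group G by (rule G)
  have hom: "f \<in> hom G H" and bij: "bij_betw f (carrier G) (carrier H)"
    using f by (auto simp: iso_def)
  have pow: "f (x [^]\<^bsub>G\<^esub> k) = f x [^]\<^bsub>H\<^esub> k" by (rule hom_nat_pow[OF hom x G H])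
  have "f (x [^]\<^bsub>G\<^esub> k) \<noteq> f \<one>\<^bsub>G\<^esub>"
    using nontrivial bij_betw_imp_inj_on[OF bij] x by (auto dest: inj_onD)
  thus "f x [^]\<^bsub>H\<^esub> k \<noteq> \<one>\<^bsub>H\<^esub>" using pow hom_one[OF hom G H] by simp
  show "\<forall>y\<in>carrier H. f x [^]\<^bsub>H\<^esub> k \<otimes>\<^bsub>H\<^esub> y = y \<otimes>\<^bsub>H\<^esub> f x [^]\<^bsub>H\<^esub> k"
  proof
    fix y assume "y \<in> carrier H"
    then obtain y' where y': "y' \<in> carrier G" and y: "y = f y'"
      using bij by (auto simp: bij_betw_def)
    have "f (x [^]\<^bsub>G\<^esub> k \<otimes>\<^bsub>G\<^esub> y') = f (y' \<otimes>\<^bsub>G\<^esub> x [^]\<^bsub>G\<^esub> k)"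
      using central y' by simp
    thus "f x [^]\<^bsub>H\<^esub> k \<otimes>\<^bsub>H\<^esub> y = y \<otimes>\<^bsub>H\<^esub> f x [^]\<^bsub>H\<^esub> k"
      using hom_mult[OF hom] x y' pow y by simp
  qed
qed

text \<open>For even n the rotation with one flipped sign is an element of M(n,1,2) whose n-th power
  -1 is central and nontrivial; an isomorphism would give such an element in G(2,2,n).\<close>
theorem not_iso_even:
  assumes even: "even n" and n: "n \<ge> 2"
  shows "\<not> (GLc n)\<lparr>carrier := sp_group n (\<lambda>p. of_int (sign p))\<rparr> \<cong> (GLc n)\<lparr>carrier := sp_group n (\<lambda>_. 1)\<rparr>"
proof
  let ?M = "(GLc n)\<lparr>carrier := sp_group n (\<lambda>p. of_int (sign p))\<rparr>"
    and ?G = "(GLc n)\<lparr>carrier := sp_group n (\<lambda>_. 1)\<rparr>"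
  assume "?M \<cong> ?G"
  then obtain f where f: "f \<in> iso ?M ?G" unfolding is_iso_def by blast
  define c where "c = spmat n (rot n) (\<lambda>j. if j = 0 then -1 else 1)"
  have c: "c \<in> sp_group n (\<lambda>p. of_int (sign p))" and cn: "c ^\<^sub>m n = - 1\<^sub>m n"
    using rot_root_of_neg_one[of n] n even unfolding c_def by auto
  have pow_c: "c [^]\<^bsub>?M\<^esub> n = - 1\<^sub>m n"
    using cn sp_group_carrier_mat[OF c] by (simp add: subgroup_pow)
  have "(- 1\<^sub>m n :: complex mat) $$ (0, 0) \<noteq> 1\<^sub>m n $$ (0, 0)" using n by simp
  hence nontrivial: "c [^]\<^bsub>?M\<^esub> n \<noteq> \<one>\<^bsub>?M\<^esub>" unfolding pow_c by auto
  have central: "\<forall>y\<in>carrier ?M. c [^]\<^bsub>?M\<^esub> n \<otimes>\<^bsub>?M\<^esub> y = y \<otimes>\<^bsub>?M\<^esub> c [^]\<^bsub>?M\<^esub> n"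
    unfolding pow_c by (auto dest: sp_group_carrier_mat)
  have fc: "f c \<in> sp_group n (\<lambda>_. 1)" using f c by (auto simp: iso_def bij_betw_def)
  note image = iso_central_power[OF sp_group_is_group[OF sign_character_sign]
      sp_group_is_group[OF sign_character_trivial] f _ nontrivial central]
  have "f c ^\<^sub>m n \<noteq> 1\<^sub>m n" and "\<forall>y\<in>sp_group n (\<lambda>_. 1). f c ^\<^sub>m n * y = y * f c ^\<^sub>m n"
    using image c sp_group_carrier_mat[OF fc] by (simp_all add: subgroup_pow)
  thus False using G22_central_nth_power[OF even n fc] by simp
qed

theorem mainTheorem19:
  fixes n :: nat
  assumes "n \<ge> 2"
  shows "M_n12 n = {A. signed_perm_mat n A \<and> det A = 1}
    \<and> card (M_n12 n) = 2 ^ (n - 1) * fact n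
    \<and> (((GLc n)\<lparr>carrier := M_n12 n\<rparr> \<cong> (GLc n)\<lparr>carrier := G22n n\<rparr>) \<longleftrightarrow> odd n)"
  unfolding M_n12_eq G22n_eq det_one_sp_group
  using card_sp_group[OF _ sign_character_sign] iso_odd not_iso_even assms by auto

end
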